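(* Let $n\ge 2$ and let $(T,A(T),B(T))$ be a clean, $d$-sparse signed tree model of an $n$-vertex graph $G$, where $T$ is an ordered full rooted binary tree whose leaves, read from left to right, are $1,\dots,n$ (so $V(G)=[n]$). Let $R$ be the full, complete rooted binary tree whose leaves are $1,\dots,n$ from left to right (so $R$ has depth $\lceil\log n\rceil+1$). Then there exist sets $A(R),B(R)$ such that $(R,A(R),B(R))$ is a $4d\log^2 n$-sparse signed tree model of $G$.
   Context: Tree notation: for a rooted tree $T$, $u\prec_T u'$ means $u$ is a strict ancestor of $u'$, $u\preceq_T u'$ means $u=u'$ or $u\prec_T u'$; for unordered pairs, $uv\preceq_T u'v'$ means ($u\preceq_T u'$ and $v\preceq_T v'$) or ($v\preceq_T u'$ and $u\preceq_T v'$), and $uv\prec_T u'v'$ means $uv\preceq_T u'v'$ and $\{u,v\}\ne\{u',v'\}$. Full: every internal node has two children; complete: all levels filled except possibly the last, whose leaves are left-aligned; depth: maximum number of nodes on a root-to-leaf path. A transversal pair of $T$ is a pair of distinct nodes neither an ancestor of the other; two transversal pairs cross if their endpoints can be named $\{a,b\},\{a',b'\}$ with $a\prec_T a'$ and $b'\prec_T b$. A signed tree model is $(T,A(T),B(T))$ with $T$ a full rooted binary tree and $A(T),B(T)$ disjoint sets of transversal pairs of $T$, no two pairs of $A(T)\cup B(T)$ crossing. It is a model of the graph on the leaf set $L(T)$ in which distinct leaves $u,v$ are adjacent iff some $u'v'\in B(T)$ has $u'v'\preceq_T uv$ and no $u''v''\in A(T)$ has $u'v'\prec_T u''v''\preceq_T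 uv$. It is clean if every pair of siblings of $T$ lies in $A(T)\cup B(T)$, and $c$-sparse if $|A(T)\cup B(T)|\le c\,|V(T)|$. $\log$ is base 2. *)

theory Defs
  imports Complex_Main "HOL-Library.Sublist"
begin

text \<open>Nodes are identified with their positions: bool lists (False = left child, True = right child).
  Ancestor relation = prefix relation on positions.\<close>

datatype btree = Lf nat | Nd btree btree

fun pos :: "btree \<Rightarrow> bool list set" where
  "pos (Lf a) = {[]}"
| "pos (Nd l r) = {[]} \<union> Cons False ` pos l \<union> Cons True ` pos r"

fun leaves :: "btree \<Rightarrow> nat list" where
  "leaves (Lf a) = [a]"
| "leaves (Nd l r) = leaves l @ leaves r"

fun sub :: "btree \<Rightarrow> bool list \<Rightarrow> btree" where
  "sub t [] = t"
| "sub (Nd l r) (b # p) = sub (if b then r else l) p"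
| "sub (Lf a) (b # p) = Lf a"

definition is_leaf_pos :: "btree \<Rightarrow> bool list \<Rightarrow> bool" where
  "is_leaf_pos t p \<longleftrightarrow> p \<in> pos t \<and> (\<exists>a. sub t p = Lf a)"

definition lbl :: "btree \<Rightarrow> bool list \<Rightarrow> nat" where
  "lbl t p = (case sub t p of Lf a \<Rightarrow> a | Nd _ _ \<Rightarrow> 0)"

definition internal_pos :: "btree \<Rightarrow> bool list \<Rightarrow> bool" where
  "internal_pos t p \<longleftrightarrow> p \<in> pos t \<and> \<not> is_leaf_pos t p"

text \<open>Unordered pairs are 2-element sets.\<close>

definition transversal :: "btree \<Rightarrow> bool list set \<Rightarrow> bool" where
  "transversal t P \<longleftrightarrow> (\<exists>u v. P = {u, v} \<and> u \<noteq> v \<and> u \<in> pos t \<and> v \<in> pos t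
       \<and> \<not> prefix u v \<and> \<not> prefix v u)"

definition pair_le :: "bool list set \<Rightarrow> bool list set \<Rightarrow> bool" where
  "pair_le P Q \<longleftrightarrow> (\<exists>u v u' v'. P = {u, v} \<and> Q = {u', v'} \<and> prefix u u' \<and> prefix v v')"

definition pair_lt :: "bool list set \<Rightarrow> bool list set \<Rightarrow> bool" where
  "pair_lt P Q \<longleftrightarrow> pair_le P Q \<and> P \<noteq> Q"

definition cross :: "bool list set \<Rightarrow> bool list set \<Rightarrow> bool" where
  "cross P Q \<longleftrightarrow> (\<exists>a b a' b'. P = {a, b} \<and> Q = {a', b'} \<and> strict_prefix a a' \<and> strict_prefix b' b)"

definition signed_tree_model :: "btree \<Rightarrow> bool list set set \<Rightarrow> bool list set set \<Rightarrow> bool" where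
  "signed_tree_model t A B \<longleftrightarrow>
     A \<inter> B = {} \<and> (\<forall>P \<in> A \<union> B. transversal t P)
     \<and> (\<forall>P \<in> A \<union> B. \<forall>Q \<in> A \<union> B. \<not> cross P Q)"

definition model_adj :: "bool list set set \<Rightarrow> bool list set set \<Rightarrow> bool list \<Rightarrow> bool list \<Rightarrow> bool" where
  "model_adj A B u v \<longleftrightarrow>
     (\<exists>P \<in> B. pair_le P {u, v} \<and> \<not> (\<exists>Q \<in> A. pair_lt P Q \<and> pair_le Q {u, v}))"

definition models_graph :: "btree \<Rightarrow> bool list set set \<Rightarrow> bool list set set \<Rightarrow> (nat \<Rightarrow> nat \<Rightarrow> bool) \<Rightarrow> bool" where
  "models_graph t A B E \<longleftrightarrow> signed_tree_model t A B \<and>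
     (\<forall>u v. is_leaf_pos t u \<longrightarrow> is_leaf_pos t v \<longrightarrow> u \<noteq> v \<longrightarrow>
        (E (lbl t u) (lbl t v) \<longleftrightarrow> model_adj A B u v))"

definition clean :: "btree \<Rightarrow> bool list set set \<Rightarrow> bool list set set \<Rightarrow> bool" where
  "clean t A B \<longleftrightarrow> (\<forall>p. internal_pos t p \<longrightarrow> {p @ [False], p @ [True]} \<in> A \<union> B)"

definition sparse :: "real \<Rightarrow> btree \<Rightarrow> bool list set set \<Rightarrow> bool list set set \<Rightarrow> bool" where
  "sparse c t A B \<longleftrightarrow> real (card (A \<union> B)) \<le> c * real (card (pos t))"

text \<open>Value of a position read as a binary number (False = 0, True = 1): left-to-right order
  on positions of equal length.\<close>
definition bits_val :: "bool list \<Rightarrow> nat" where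
  "bits_val p = foldl (\<lambda>a b. 2 * a + (if b then 1 else 0)) 0 p"

definition complete :: "btree \<Rightarrow> bool" where
  "complete t \<longleftrightarrow> (\<exists>h. (\<forall>p. length p < h \<longrightarrow> p \<in> pos t)
       \<and> (\<forall>p \<in> pos t. length p \<le> h)
       \<and> (\<forall>p q. length p = h \<longrightarrow> length q = h \<longrightarrow> q \<in> pos t \<longrightarrow> bits_val p \<le> bits_val q \<longrightarrow> p \<in> pos t))"

end

theory Submission
  imports Defs
begin

(* The leaves below a node u of T form an interval of [n], and if that interval is not all of
   [n] it is the disjoint union of the leaf sets of at most 2 (depth R - 2) <= 2 log n maximal
   subtrees of the complete tree R.  Every pair {u, v} of A(T) \<union> B(T) is replaced by all pairs
   {x, y} of roots of such subtrees below u and v, and a new pair gets the sign of the largest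
   (for \<preceq>) old pair that produces it.  The pairs of a non-crossing family below two given leaves
   form a chain, and the sign of its top element decides adjacency.  Lifting is monotone and
   keeps the family non-crossing, so the top pair below two leaves in R is a lift of the top
   pair in T and has the same sign.  Each old pair produces at most (2 log n)^2 new pairs, and T
   and R have the same number of nodes. *)

lemma leaves_ne [simp]: "leaves t \<noteq> []"
  by (induction t) auto

lemma pos_Nil [simp]: "[] \<in> pos t"
  by (cases t) auto

lemma sub_Lf [simp]: "sub (Lf a) p = Lf a"
  by (cases p) auto

lemma sub_append: "sub t (p @ q) = sub (sub t p) q"
  by (induction t p rule: sub.induct) auto

lemma pos_append: "p @ q \<in> pos t \<longleftrightarrow> p \<in> pos t \<and> q \<in> pos (sub t p)"
  by (induction t p rule: sub.induct) (auto simp: image_iff)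

lemma Cons_mem_pos_Nd [simp]: "b # p \<in> pos (Nd l r) \<longleftrightarrow> p \<in> pos (if b then r else l)"
  by (cases b) auto

declare pos.simps(2) [simp del]

lemma is_leaf_pos_Nd_Cons [simp]:
  "is_leaf_pos (Nd l r) (b # p) \<longleftrightarrow> is_leaf_pos (if b then r else l) p"
  by (simp add: is_leaf_pos_def)

lemma lbl_Nd_Cons [simp]: "lbl (Nd l r) (b # p) = lbl (if b then r else l) p"
  by (simp add: lbl_def)

lemma finite_pos: "finite (pos t)"
  by (induction t) (auto simp: pos.simps)

lemma card_pos: "card (pos t) = 2 * length (leaves t) - 1"
proof (induction t)
  case (Nd l r)
  have pos_Nd: "pos (Nd l r) = insert [] (Cons False ` pos l \<union> Cons True ` pos r)"
    by (simp add: pos.simps)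
  have "card (Cons False ` pos l \<union> Cons True ` pos r) = card (pos l) + card (pos r)"
    by (subst card_Un_disjoint) (auto simp: finite_pos card_image)
  then have "card (pos (Nd l r)) = 1 + card (pos l) + card (pos r)"
    unfolding pos_Nd by (subst card_insert_disjoint) (auto simp: finite_pos)
  then show ?case
    using Nd leaves_ne[of r] by (cases "leaves r") auto
qed simp

lemma sublist_leaves_sub: "sublist (leaves (sub t p)) (leaves t)"
  by (induction t p rule: sub.induct) (auto intro: sublist_order.order_trans)

definition leafset :: "btree \<Rightarrow> bool list \<Rightarrow> nat set" where
  "leafset t p = set (leaves (sub t p))"

lemma leafset_Nd_Cons [simp]: "leafset (Nd l r) (b # p) = leafset (if b then r else l) p"
  by (simp add: leafset_def)

lemma leafset_Nil: "leafset t [] = set (leaves t)"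
  by (simp add: leafset_def)

lemma leafset_ne: "leafset t p \<noteq> {}"
  by (simp add: leafset_def)

lemma leafset_subset: "leafset t p \<subseteq> set (leaves t)"
  unfolding leafset_def by (rule set_mono_sublist[OF sublist_leaves_sub])

lemma leafset_antimono: "prefix u v \<Longrightarrow> leafset t v \<subseteq> leafset t u"
  by (metis prefix_def leafset_def sub_append leafset_subset)

lemma leafset_disjoint:
  assumes "distinct (leaves t)" "u \<in> pos t" "v \<in> pos t" "\<not> prefix u v" "\<not> prefix v u"
  shows "leafset t u \<inter> leafset t v = {}"
  using assms
proof (induction t arbitrary: u v)
  case (Nd l r)
  obtain b u' c v' where u: "u = b # u'" and v: "v = c # v'"
    using Nd.prems by (cases u; cases v) auto
  show ?case
  proof (cases "b = c")
    case True
    then show ?thesis using Nd u v by (cases b) auto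
  next
    case False
    then show ?thesis using Nd.prems(1) u v
      by (cases b) (auto dest!: leafset_subset[THEN subsetD])
  qed
qed simp

lemma leafset_comparable:
  "distinct (leaves t) \<Longrightarrow> u \<in> pos t \<Longrightarrow> v \<in> pos t \<Longrightarrow> a \<in> leafset t u \<Longrightarrow> a \<in> leafset t v
    \<Longrightarrow> prefix u v \<or> prefix v u"
  using leafset_disjoint by blast

lemma leafset_leaf: "is_leaf_pos t w \<Longrightarrow> leafset t w = {lbl t w}"
  by (auto simp: is_leaf_pos_def leafset_def lbl_def)

lemma leaf_pos_prefix_eq: "is_leaf_pos t w \<Longrightarrow> prefix w u \<Longrightarrow> u \<in> pos t \<Longrightarrow> u = w"
  by (auto simp: is_leaf_pos_def prefix_def pos_append)

lemma lbl_mem_leafset_iff: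
  assumes "distinct (leaves t)" "is_leaf_pos t w" "u \<in> pos t"
  shows "lbl t w \<in> leafset t u \<longleftrightarrow> prefix u w"
proof
  assume "lbl t w \<in> leafset t u"
  moreover have "w \<in> pos t" "lbl t w \<in> leafset t w"
    using assms(2) leafset_leaf by (auto simp: is_leaf_pos_def)
  ultimately show "prefix u w"
    using assms leafset_comparable leaf_pos_prefix_eq by metis
qed (use assms leafset_leaf leafset_antimono in blast)

lemma lbl_mem_leaves: "is_leaf_pos t w \<Longrightarrow> lbl t w \<in> set (leaves t)"
  using leafset_leaf leafset_subset by blast

lemma leaf_pos_exists: "a \<in> set (leaves t) \<Longrightarrow> \<exists>w. is_leaf_pos t w \<and> lbl t w = a"
proof (induction t)
  case (Lf x)
  then show ?case by (intro exI[of _ "[]"]) (simp add: is_leaf_pos_def lbl_def)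
next
  case (Nd l r)
  then show ?case
    by (metis Un_iff is_leaf_pos_Nd_Cons lbl_Nd_Cons leaves.simps(2) set_append)
qed

lemma leaf_pos_inj:
  assumes "distinct (leaves t)" "is_leaf_pos t w1" "is_leaf_pos t w2" "lbl t w1 = lbl t w2"
  shows "w1 = w2"
proof -
  have "w1 \<in> pos t" "w2 \<in> pos t" using assms(2,3) by (auto simp: is_leaf_pos_def)
  then show ?thesis
    using assms leafset_leaf lbl_mem_leafset_iff leaf_pos_prefix_eq by (metis singletonI)
qed

lemma append_eq_upt:
  assumes "xs @ ys = [a..<b]"
  shows "xs = [a..<a + length xs]" "ys = [a + length xs..<b]"
proof -
  show "xs = [a..<a + length xs]"
  proof (cases "xs = []")
    case False
    then have "a + length xs \<le> b"
      using arg_cong[OF assms, of length] by (cases xs) auto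
    then show ?thesis
      using assms by (metis append_eq_conv_conj take_upt)
  qed simp
  show "ys = [a + length xs..<b]"
    using assms by (metis append_eq_conv_conj drop_upt)
qed

lemma leafset_interval: "leaves t = [a..<b] \<Longrightarrow> \<exists>i j. leafset t p = {i..<j}"
proof -
  assume "leaves t = [a..<b]"
  then obtain ps ss where "ps @ leaves (sub t p) @ ss = [a..<b]"
    using sublist_leaves_sub[of t p] unfolding sublist_def by metis
  then show ?thesis
    unfolding leafset_def by (metis append_eq_upt set_upt)
qed

section \<open>Maximal subtrees inside a set of leaves\<close>

definition max_subtrees :: "nat set \<Rightarrow> btree \<Rightarrow> bool list set" where
  "max_subtrees S t =
     {x \<in> pos t. leafset t x \<subseteq> S \<and> (\<forall>y. strict_prefix y x \<longrightarrow> \<not> leafset t y \<subseteq> S)}"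

lemma max_subtreesD:
  "x \<in> max_subtrees S t \<Longrightarrow> x \<in> pos t \<and> leafset t x \<subseteq> S"
  by (simp add: max_subtrees_def)

lemma max_subtrees_maximal:
  "x \<in> max_subtrees S t \<Longrightarrow> strict_prefix y x \<Longrightarrow> \<not> leafset t y \<subseteq> S"
  by (simp add: max_subtrees_def)

lemma finite_max_subtrees: "finite (max_subtrees S t)"
  unfolding max_subtrees_def using finite_pos by simp

lemma max_subtrees_cover:
  assumes "a \<in> S" "a \<in> set (leaves t)"
  shows "\<exists>x \<in> max_subtrees S t. a \<in> leafset t x"
proof -
  obtain w where w: "is_leaf_pos t w" "lbl t w = a"
    using leaf_pos_exists assms(2) by blast
  then have "prefix w w \<and> leafset t w \<subseteq> S"
    using assms(1) leafset_leaf by auto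
  from ex_has_least_nat[of "\<lambda>y. prefix y w \<and> leafset t y \<subseteq> S", OF this, of length]
  obtain x where x: "prefix x w" "leafset t x \<subseteq> S"
    and least: "\<And>y. prefix y w \<Longrightarrow> leafset t y \<subseteq> S \<Longrightarrow> length x \<le> length y"
    by blast
  have "x \<in> pos t"
    using x(1) w(1) by (auto simp: prefix_def is_leaf_pos_def pos_append)
  moreover have "\<not> leafset t y \<subseteq> S" if "strict_prefix y x" for y
  proof
    assume "leafset t y \<subseteq> S"
    moreover have "prefix y w"
      using that x(1) by (meson prefix_order.less_imp_le prefix_order.order_trans)
    ultimately have "length x \<le> length y" using least by blast
    with prefix_length_less[OF that] show False by simp
  qed
  moreover have "a \<in> leafset t x"
    using w leafset_leaf leafset_antimono[OF x(1)] by blast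
  ultimately show ?thesis
    using x(2) unfolding max_subtrees_def by blast
qed

lemma max_subtrees_whole:
  assumes "set (leaves t) \<subseteq> S"
  shows "max_subtrees S t = {[]}"
proof -
  have "strict_prefix [] x" if "x \<noteq> []" for x :: "bool list"
    using that by (cases x) auto
  then show ?thesis
    using assms unfolding max_subtrees_def by (auto simp: leafset_Nil) (metis leafset_Nil)
qed

lemma max_subtrees_outside: "S \<inter> set (leaves t) = {} \<Longrightarrow> max_subtrees S t = {}"
  unfolding max_subtrees_def using leafset_ne leafset_subset by blast

lemma all_strict_prefix_Cons:
  "(\<forall>y. strict_prefix y (b # x) \<longrightarrow> P y) \<longleftrightarrow> P [] \<and> (\<forall>y. strict_prefix y x \<longrightarrow> P (b # y))"
proof -
  have "strict_prefix y (b # x) \<longleftrightarrow> y = [] \<or> (\<exists>y'. y = b # y' \<and> strict_prefix y' x)" for y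
    by (cases y) auto
  then show ?thesis by auto
qed

lemma max_subtrees_Nd:
  assumes "\<not> set (leaves (Nd l r)) \<subseteq> S"
  shows "max_subtrees S (Nd l r) = Cons False ` max_subtrees S l \<union> Cons True ` max_subtrees S r"
proof -
  have Cons: "b # x \<in> max_subtrees S (Nd l r) \<longleftrightarrow> x \<in> max_subtrees S (if b then r else l)"
    for b x using assms by (simp add: max_subtrees_def all_strict_prefix_Cons leafset_Nil)
  have Nil: "[] \<notin> max_subtrees S (Nd l r)"
    using assms by (simp add: max_subtrees_def leafset_Nil)
  have "x \<in> max_subtrees S (Nd l r) \<longleftrightarrow>
      x \<in> Cons False ` max_subtrees S l \<union> Cons True ` max_subtrees S r" for x
    using Cons Nil by (cases x) auto
  then show ?thesis by blast
qed

lemma card_max_subtrees_Nd: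
  "\<not> set (leaves (Nd l r)) \<subseteq> S \<Longrightarrow>
    card (max_subtrees S (Nd l r)) \<le> card (max_subtrees S l) + card (max_subtrees S r)"
  unfolding max_subtrees_Nd
  by (rule order_trans[OF card_Un_le add_mono]) (auto intro: card_image_le finite_max_subtrees)

fun height :: "btree \<Rightarrow> nat" where
  "height (Lf a) = 0"
| "height (Nd l r) = Suc (max (height l) (height r))"

lemma leaves_Nd_upt:
  assumes "leaves (Nd l r) = [a..<b]"
  obtains m where "leaves l = [a..<m]" "leaves r = [m..<b]" "a \<le> m" "m \<le> b"
proof
  let ?m = "a + length (leaves l)"
  show l: "leaves l = [a..<?m]" and r: "leaves r = [?m..<b]"
    using append_eq_upt[of "leaves l" "leaves r" a b] assms by simp_all
  show "a \<le> ?m" by simp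
  show "?m \<le> b"
    using r leaves_ne[of r] by (metis upt_eq_Nil_conv nat_le_linear)
qed

lemma card_max_subtrees_initial:
  assumes "leaves t = [a..<b]" "i \<le> a" "\<not> {a..<b} \<subseteq> {i..<j}"
  shows "card (max_subtrees {i..<j} t) \<le> height t"
  using assms
proof (induction t arbitrary: a b)
  case (Lf c)
  then have "c = a" "b = Suc a"
    using Lf.prems(1)[symmetric] by (auto simp: upt_eq_Cons_conv)
  then show ?case
    using Lf.prems by (subst max_subtrees_outside) auto
next
  case (Nd l r)
  obtain m where m: "leaves l = [a..<m]" "leaves r = [m..<b]" "a \<le> m" "m \<le> b"
    using Nd.prems(1) by (rule leaves_Nd_upt)
  have "card (max_subtrees {i..<j} (Nd l r))
      \<le> card (max_subtrees {i..<j} l) + card (max_subtrees {i..<j} r)"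
    using Nd.prems by (intro card_max_subtrees_Nd) simp
  moreover consider "j \<le> m" | "m < j" by linarith
  then have "card (max_subtrees {i..<j} l) + card (max_subtrees {i..<j} r)
      \<le> Suc (max (height l) (height r))"
  proof cases
    case 1
    then have "max_subtrees {i..<j} r = {}"
      using m by (intro max_subtrees_outside) auto
    moreover have "card (max_subtrees {i..<j} l) \<le> Suc (height l)"
      using Nd.IH(1)[OF m(1)] Nd.prems(2) m
      by (cases "{a..<m} \<subseteq> {i..<j}") (auto simp: max_subtrees_whole)
    ultimately show ?thesis by simp
  next
    case 2
    then have "max_subtrees {i..<j} l = {[]}"
      using m Nd.prems(2) by (intro max_subtrees_whole) auto
    moreover have "\<not> {m..<b} \<subseteq> {i..<j}"
      using Nd.prems(2,3) m 2 by auto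
    then have "card (max_subtrees {i..<j} r) \<le> height r"
      using Nd.IH(2)[OF m(2)] Nd.prems(2) m(3) by simp
    ultimately show ?thesis by simp
  qed
  ultimately show ?case by simp
qed

lemma card_max_subtrees_final:
  assumes "leaves t = [a..<b]" "b \<le> j" "\<not> {a..<b} \<subseteq> {i..<j}"
  shows "card (max_subtrees {i..<j} t) \<le> height t"
  using assms
proof (induction t arbitrary: a b)
  case (Lf c)
  then have "c = a" "b = Suc a"
    using Lf.prems(1)[symmetric] by (auto simp: upt_eq_Cons_conv)
  then show ?case
    using Lf.prems by (subst max_subtrees_outside) auto
next
  case (Nd l r)
  obtain m where m: "leaves l = [a..<m]" "leaves r = [m..<b]" "a \<le> m" "m \<le> b"
    using Nd.prems(1) by (rule leaves_Nd_upt)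
  have "card (max_subtrees {i..<j} (Nd l r))
      \<le> card (max_subtrees {i..<j} l) + card (max_subtrees {i..<j} r)"
    using Nd.prems by (intro card_max_subtrees_Nd) simp
  moreover consider "m \<le> i" | "i < m" by linarith
  then have "card (max_subtrees {i..<j} l) + card (max_subtrees {i..<j} r)
      \<le> Suc (max (height l) (height r))"
  proof cases
    case 1
    then have "max_subtrees {i..<j} l = {}"
      using m by (intro max_subtrees_outside) auto
    moreover have "card (max_subtrees {i..<j} r) \<le> Suc (height r)"
      using Nd.IH(2)[OF m(2)] Nd.prems(2) m
      by (cases "{m..<b} \<subseteq> {i..<j}") (auto simp: max_subtrees_whole)
    ultimately show ?thesis by simp
  next
    case 2
    then have "max_subtrees {i..<j} r = {[]}"
      using m Nd.prems(2) by (intro max_subtrees_whole) auto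
    moreover have "\<not> {a..<m} \<subseteq> {i..<j}"
      using Nd.prems(2,3) m 2 by auto
    then have "card (max_subtrees {i..<j} l) \<le> height l"
      using Nd.IH(1)[OF m(1)] Nd.prems(2) m(4) by simp
    ultimately show ?thesis by simp
  qed
  ultimately show ?case by simp
qed

lemma card_max_subtrees_contained:
  "leaves t = [a..<b] \<Longrightarrow> {a..<b} \<subseteq> {i..<j} \<Longrightarrow> card (max_subtrees {i..<j} t) = 1"
  by (simp add: max_subtrees_whole)

lemma card_max_subtrees_straddle:
  assumes "leaves l = [a..<m]" "leaves r = [m..<b]" "i < m" "m < j"
    and "\<not> ({a..<m} \<subseteq> {i..<j} \<and> {m..<b} \<subseteq> {i..<j})"
  shows "card (max_subtrees {i..<j} l) + card (max_subtrees {i..<j} r)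
    \<le> max 1 (2 * max (height l) (height r))"
proof -
  have "card (max_subtrees {i..<j} l) \<le> (if {a..<m} \<subseteq> {i..<j} then 1 else height l)"
    using card_max_subtrees_final[OF assms(1)] card_max_subtrees_contained[OF assms(1)] assms(4)
    by simp
  moreover have "card (max_subtrees {i..<j} r) \<le> (if {m..<b} \<subseteq> {i..<j} then 1 else height r)"
    using card_max_subtrees_initial[OF assms(2)] card_max_subtrees_contained[OF assms(2)] assms(3)
    by simp
  ultimately show ?thesis
    using assms(5) by (auto split: if_splits)
qed

lemma card_max_subtrees_interval:
  assumes "leaves t = [a..<b]" "\<not> {a..<b} \<subseteq> {i..<j}"
  shows "card (max_subtrees {i..<j} t) \<le> max 1 (2 * height t - 2)"
  using assms
proof (induction t arbitrary: a b)
  case (Lf c)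
  have "card (max_subtrees {i..<j} (Lf c)) \<le> card {[] :: bool list}"
    by (rule card_mono) (auto dest: max_subtreesD)
  then show ?case by simp
next
  case (Nd l r)
  obtain m where m: "leaves l = [a..<m]" "leaves r = [m..<b]" "a \<le> m" "m \<le> b"
    using Nd.prems(1) by (rule leaves_Nd_upt)
  have "card (max_subtrees {i..<j} (Nd l r))
      \<le> card (max_subtrees {i..<j} l) + card (max_subtrees {i..<j} r)"
    using Nd.prems by (intro card_max_subtrees_Nd) simp
  moreover consider "j \<le> m" | "m \<le> i" | "i < m" "m < j" by linarith
  then have "card (max_subtrees {i..<j} l) + card (max_subtrees {i..<j} r)
      \<le> max 1 (2 * max (height l) (height r))"
  proof cases
    case 1
    then have "max_subtrees {i..<j} r = {}"
      using m by (intro max_subtrees_outside) auto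
    moreover have "card (max_subtrees {i..<j} l) \<le> max 1 (2 * height l - 2)"
      using Nd.IH(1)[OF m(1)] card_max_subtrees_contained[OF m(1)] by fastforce
    ultimately show ?thesis by simp
  next
    case 2
    then have "max_subtrees {i..<j} l = {}"
      using m by (intro max_subtrees_outside) auto
    moreover have "card (max_subtrees {i..<j} r) \<le> max 1 (2 * height r - 2)"
      using Nd.IH(2)[OF m(2)] card_max_subtrees_contained[OF m(2)] by fastforce
    ultimately show ?thesis by simp
  next
    case 3
    have "\<not> ({a..<m} \<subseteq> {i..<j} \<and> {m..<b} \<subseteq> {i..<j})"
      using Nd.prems(2) ivl_disj_un_two(3)[OF m(3,4)] by blast
    then show ?thesis
      using card_max_subtrees_straddle[OF m(1,2) 3] by blast
  qed
  ultimately show ?case by simp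
qed

lemma full_levels_leaves:
  "(\<forall>p. length p \<le> k \<longrightarrow> p \<in> pos t) \<Longrightarrow>
    2 ^ k \<le> length (leaves t) \<and> (k < height t \<longrightarrow> 2 ^ k < length (leaves t))"
proof (induction k arbitrary: t)
  case 0
  show ?case
  proof (cases t)
    case (Nd l r)
    then show ?thesis
      using leaves_ne[of l] leaves_ne[of r] by (cases "leaves l"; cases "leaves r") auto
  qed (simp add: Suc_le_eq)
next
  case (Suc k)
  have "[False] \<in> pos t" using Suc.prems by auto
  then obtain l r where t: "t = Nd l r" by (cases t) auto
  have "\<forall>p. length p \<le> k \<longrightarrow> p \<in> pos l \<and> p \<in> pos r"
  proof (intro allI impI)
    fix p :: "bool list"
    assume "length p \<le> k"
    then have "False # p \<in> pos t" "True # p \<in> pos t"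
      using Suc.prems by auto
    then show "p \<in> pos l \<and> p \<in> pos r"
      using t by simp
  qed
  then have "2 ^ k \<le> length (leaves l) \<and> (k < height l \<longrightarrow> 2 ^ k < length (leaves l))"
    "2 ^ k \<le> length (leaves r) \<and> (k < height r \<longrightarrow> 2 ^ k < length (leaves r))"
    using Suc.IH by blast+
  then show ?case
    using t by (auto simp: less_max_iff_disj)
qed

lemma height_attained: "\<exists>p \<in> pos t. length p = height t"
proof (induction t)
  case (Nd l r)
  then obtain p q where "p \<in> pos l" "length p = height l" "q \<in> pos r" "length q = height r"
    by blast
  then have "False # p \<in> pos (Nd l r)" "True # q \<in> pos (Nd l r)"
    and "height (Nd l r) = max (length (False # p)) (length (True # q))"
    by simp_all
  then show ?case
    by (metis max_def)
qed simp

lemma complete_pow_height_less: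
  assumes "complete t" "0 < height t"
  shows "2 ^ (height t - 1) < length (leaves t)"
proof -
  obtain h where full: "\<forall>p. length p < h \<longrightarrow> p \<in> pos t" and low: "\<forall>p \<in> pos t. length p \<le> h"
    using assms(1) unfolding complete_def by blast
  obtain p where "p \<in> pos t" "length p = height t"
    using height_attained by blast
  then have "height t \<le> h"
    using low by auto
  then have "\<forall>p. length p \<le> height t - 1 \<longrightarrow> p \<in> pos t"
    using full assms(2) by auto
  then show ?thesis
    using full_levels_leaves assms(2) by simp
qed

lemma complete_height_le_log:
  assumes "complete t" "length (leaves t) = n" "2 \<le> n"
  shows "real (max 1 (2 * height t - 2)) \<le> 2 * log 2 n"
proof -
  have log_ge_1: "1 \<le> log 2 n"
    using assms(3) by simp
  show ?thesis
  proof (cases "height t \<le> 1")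
    case True
    then show ?thesis using log_ge_1 by simp
  next
    case False
    then have "2 ^ (height t - 1) < n"
      using complete_pow_height_less[OF assms(1)] assms(2) by simp
    then have "real (height t - 1) < log 2 n"
      using assms(3) by (subst less_log_iff) (auto simp: powr_realpow)
    then show ?thesis using False by simp
  qed
qed

section \<open>Pairs below two leaves\<close>

(* covers t P a b is the paper's P \<preceq> ab for the leaves labelled a and b. *)
definition covers :: "btree \<Rightarrow> bool list set \<Rightarrow> nat \<Rightarrow> nat \<Rightarrow> bool" where
  "covers t P a b \<longleftrightarrow> (\<exists>u v. P = {u, v} \<and> a \<in> leafset t u \<and> b \<in> leafset t v)"

definition top_cover :: "btree \<Rightarrow> bool list set set \<Rightarrow> bool list set \<Rightarrow> nat \<Rightarrow> nat \<Rightarrow> bool" where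
  "top_cover t C P a b \<longleftrightarrow> P \<in> C \<and> covers t P a b \<and> (\<forall>Q \<in> C. covers t Q a b \<longrightarrow> pair_le Q P)"

lemma transversalD:
  assumes "transversal t P" "P = {u, v}"
  shows "u \<in> pos t" "v \<in> pos t" "\<not> prefix u v" "\<not> prefix v u"
  using assms unfolding transversal_def by (auto simp: doubleton_eq_iff)

lemma transversal_leafset_disjoint:
  assumes "distinct (leaves t)" "transversal t P" "P = {u, v}"
  shows "leafset t u \<inter> leafset t v = {}"
  by (rule leafset_disjoint[OF assms(1) transversalD[OF assms(2,3)]])

lemma finite_signed_tree_model: "signed_tree_model t A B \<Longrightarrow> finite (A \<union> B)"
proof -
  assume "signed_tree_model t A B"
  then have "transversal t P" if "P \<in> A \<union> B" for P
    using that unfolding signed_tree_model_def by blast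
  then have "A \<union> B \<subseteq> Pow (pos t)"
    unfolding transversal_def by auto
  then show ?thesis
    using finite_pos finite_subset by blast
qed

lemma pair_leI: "prefix u u' \<Longrightarrow> prefix v v' \<Longrightarrow> pair_le {u, v} {u', v'}"
  unfolding pair_le_def by blast

lemma pair_le_oriented:
  assumes "distinct (leaves t)" "transversal t P" "P = {u, v}" "Q = {u', v'}"
    and "a \<in> leafset t u" "b \<in> leafset t v" "a \<in> leafset t u'" "b \<in> leafset t v'"
    and "pair_le P Q"
  shows "prefix u u' \<and> prefix v v'"
proof -
  obtain p1 p2 q1 q2 where pq: "P = {p1, p2}" "Q = {q1, q2}" "prefix p1 q1" "prefix p2 q2"
    using assms(9) unfolding pair_le_def by blast
  have "leafset t q1 \<subseteq> leafset t p1" "leafset t q2 \<subseteq> leafset t p2"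
    using pq(3,4) by (simp_all add: leafset_antimono)
  moreover have "leafset t u \<inter> leafset t v = {}"
    using transversal_leafset_disjoint assms(1-3) by blast
  ultimately show ?thesis
    using assms(3-8) pq by (auto simp: doubleton_eq_iff)
qed

lemma covers_pair_le_total:
  assumes "distinct (leaves t)" "transversal t P" "transversal t Q" "\<not> cross P Q" "\<not> cross Q P"
    and "covers t P a b" "covers t Q a b"
  shows "pair_le P Q \<or> pair_le Q P"
proof -
  obtain u v u' v' where P: "P = {u, v}" "a \<in> leafset t u" "b \<in> leafset t v"
    and Q: "Q = {u', v'}" "a \<in> leafset t u'" "b \<in> leafset t v'"
    using assms(6,7) unfolding covers_def by blast
  have "prefix u u' \<or> prefix u' u"
    using leafset_comparable[OF assms(1) transversalD(1)[OF assms(2) P(1)]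
        transversalD(1)[OF assms(3) Q(1)] P(2) Q(2)] .
  moreover have "prefix v v' \<or> prefix v' v"
    using leafset_comparable[OF assms(1) transversalD(2)[OF assms(2) P(1)]
        transversalD(2)[OF assms(3) Q(1)] P(3) Q(3)] .
  moreover have "\<not> (strict_prefix u u' \<and> strict_prefix v' v)"
    and "\<not> (strict_prefix u' u \<and> strict_prefix v v')"
    using assms(4,5) P(1) Q(1) unfolding cross_def by blast+
  ultimately have "(prefix u u' \<and> prefix v v') \<or> (prefix u' u \<and> prefix v' v)"
    unfolding strict_prefix_def by blast
  then show ?thesis
    using P(1) Q(1) pair_leI by blast
qed

lemma pair_le_sum_length:
  assumes "transversal t P" "transversal t Q" "pair_le P Q"
  shows "sum length P \<le> sum length Q" and "sum length Q \<le> sum length P \<Longrightarrow> P = Q"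
proof -
  obtain u v u' v' where uv: "P = {u, v}" "Q = {u', v'}" "prefix u u'" "prefix v v'"
    using assms(3) unfolding pair_le_def by blast
  have "u \<noteq> v" "u' \<noteq> v'"
    using transversalD(3)[OF assms(1) uv(1)] transversalD(3)[OF assms(2) uv(2)] by auto
  then have sums: "sum length P = length u + length v" "sum length Q = length u' + length v'"
    using uv(1,2) by simp_all
  then show "sum length P \<le> sum length Q"
    using prefix_length_le[OF uv(3)] prefix_length_le[OF uv(4)] by simp
  assume "sum length Q \<le> sum length P"
  then have "\<not> strict_prefix u u'" "\<not> strict_prefix v v'"
    using sums prefix_length_less prefix_length_le[OF uv(3)] prefix_length_le[OF uv(4)]
    by fastforce+
  then show "P = Q"
    using uv unfolding strict_prefix_def by auto
qed

lemma pair_le_antisym: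
  "transversal t P \<Longrightarrow> transversal t Q \<Longrightarrow> pair_le P Q \<Longrightarrow> pair_le Q P \<Longrightarrow> P = Q"
  using pair_le_sum_length by blast

(* A pair of maximal total length is the top: the pairs below two leaves form a chain, along
   which the total length strictly increases. *)
lemma top_cover_exists:
  assumes "distinct (leaves t)" "finite C" "\<forall>P \<in> C. transversal t P" "\<forall>P \<in> C. \<forall>Q \<in> C. \<not> cross P Q"
    and "P \<in> C" "covers t P a b"
  shows "\<exists>M. top_cover t C M a b"
proof -
  define D where "D = {P \<in> C. covers t P a b}"
  have "finite D" "D \<noteq> {}"
    using assms(2,5,6) unfolding D_def by auto
  then have "Max (sum length ` D) \<in> sum length ` D"
    by (intro Max_in) auto
  then obtain M where M: "M \<in> D" and M_max: "sum length M = Max (sum length ` D)"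
    by auto
  have "pair_le Q M" if Q: "Q \<in> D" for Q
  proof -
    have MC: "M \<in> C" "covers t M a b" and QC: "Q \<in> C" "covers t Q a b"
      using M Q unfolding D_def by auto
    then have tr: "transversal t M" "transversal t Q"
      using assms(3) by blast+
    have "pair_le M Q \<or> pair_le Q M"
      using covers_pair_le_total[OF assms(1) tr] assms(4) MC QC by blast
    moreover have "sum length Q \<le> sum length M"
      using Q \<open>finite D\<close> M_max by simp
    then have "M = Q" if "pair_le M Q"
      using pair_le_sum_length(2)[OF tr that] by blast
    moreover obtain u v where "Q = {u, v}"
      using tr(2) unfolding transversal_def by blast
    ultimately show ?thesis
      using pair_leI[of u u v v] by blast
  qed
  then show ?thesis
    using M unfolding D_def top_cover_def by blast
qed

lemma pair_le_leaf_pair_iff: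
  assumes "distinct (leaves t)" "transversal t P" "is_leaf_pos t w1" "is_leaf_pos t w2"
  shows "pair_le P {w1, w2} \<longleftrightarrow> covers t P (lbl t w1) (lbl t w2)"
proof
  assume "pair_le P {w1, w2}"
  then obtain u v where "P = {u, v}" "prefix u w1" "prefix v w2"
    unfolding pair_le_def doubleton_eq_iff by (metis insert_commute)
  moreover from this have "lbl t w1 \<in> leafset t u" "lbl t w2 \<in> leafset t v"
    using lbl_mem_leafset_iff[OF assms(1,3) transversalD(1)[OF assms(2)]]
      lbl_mem_leafset_iff[OF assms(1,4) transversalD(2)[OF assms(2)]] by blast+
  ultimately show "covers t P (lbl t w1) (lbl t w2)"
    unfolding covers_def by blast
next
  assume "covers t P (lbl t w1) (lbl t w2)"
  then obtain u v where "P = {u, v}" "lbl t w1 \<in> leafset t u" "lbl t w2 \<in> leafset t v"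
    unfolding covers_def by blast
  then show "pair_le P {w1, w2}"
    using lbl_mem_leafset_iff[OF assms(1)] transversalD[OF assms(2)] assms(3,4) pair_leI by metis
qed

lemma top_cover_if_model_adj:
  assumes "distinct (leaves t)" "signed_tree_model t A B" "is_leaf_pos t w1" "is_leaf_pos t w2"
    and "model_adj A B w1 w2"
  shows "\<exists>P \<in> B. top_cover t (A \<union> B) P (lbl t w1) (lbl t w2)"
proof -
  have disj: "A \<inter> B = {}" and tr: "\<forall>P \<in> A \<union> B. transversal t P"
    and nc: "\<forall>P \<in> A \<union> B. \<forall>Q \<in> A \<union> B. \<not> cross P Q"
    using assms(2) unfolding signed_tree_model_def by blast+
  have le_iff: "pair_le P {w1, w2} \<longleftrightarrow> covers t P (lbl t w1) (lbl t w2)" if "P \<in> A \<union> B" for P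
    using pair_le_leaf_pair_iff[OF assms(1) _ assms(3,4)] tr that by blast
  obtain P where P: "P \<in> B" "pair_le P {w1, w2}"
    and no_A: "\<not> (\<exists>Q \<in> A. pair_lt P Q \<and> pair_le Q {w1, w2})"
    using assms(5) unfolding model_adj_def by blast
  have P_covers: "covers t P (lbl t w1) (lbl t w2)"
    using le_iff P by blast
  then obtain M where M: "top_cover t (A \<union> B) M (lbl t w1) (lbl t w2)"
    using top_cover_exists[OF assms(1) finite_signed_tree_model[OF assms(2)] tr nc] P(1) by blast
  have "M \<notin> A"
  proof
    assume MA: "M \<in> A"
    have "pair_le P M"
      using M P(1) P_covers unfolding top_cover_def by blast
    moreover have "P \<noteq> M"
      using P(1) MA disj by blast
    moreover have "pair_le M {w1, w2}"
      using M le_iff unfolding top_cover_def by blast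
    ultimately show False
      using no_A MA unfolding pair_lt_def by blast
  qed
  then show ?thesis
    using M unfolding top_cover_def by blast
qed

lemma model_adj_if_top_cover:
  assumes "distinct (leaves t)" "signed_tree_model t A B" "is_leaf_pos t w1" "is_leaf_pos t w2"
    and "P \<in> B" "top_cover t (A \<union> B) P (lbl t w1) (lbl t w2)"
  shows "model_adj A B w1 w2"
proof -
  have tr: "\<forall>P \<in> A \<union> B. transversal t P"
    using assms(2) unfolding signed_tree_model_def by blast
  have le_iff: "pair_le Q {w1, w2} \<longleftrightarrow> covers t Q (lbl t w1) (lbl t w2)" if "Q \<in> A \<union> B" for Q
    using pair_le_leaf_pair_iff[OF assms(1) _ assms(3,4)] tr that by blast
  have "\<not> pair_lt P Q" if Q: "Q \<in> A" "pair_le Q {w1, w2}" for Q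
  proof
    assume "pair_lt P Q"
    moreover have "pair_le Q P"
      using assms(6) le_iff Q unfolding top_cover_def by blast
    ultimately show False
      using pair_le_antisym tr assms(5) Q(1) unfolding pair_lt_def by blast
  qed
  moreover have "pair_le P {w1, w2}"
    using assms(5,6) le_iff unfolding top_cover_def by blast
  ultimately show ?thesis
    using assms(5) unfolding model_adj_def by blast
qed

lemma model_adj_iff_top_cover:
  assumes "distinct (leaves t)" "signed_tree_model t A B" "is_leaf_pos t w1" "is_leaf_pos t w2"
  shows "model_adj A B w1 w2 \<longleftrightarrow> (\<exists>P \<in> B. top_cover t (A \<union> B) P (lbl t w1) (lbl t w2))"
  using top_cover_if_model_adj[OF assms] model_adj_if_top_cover[OF assms] by blast

section \<open>Moving a signed tree model to a tree with the same leaves\<close>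

locale tree_transfer =
  fixes T R :: btree and A B :: "bool list set set"
  assumes distinct_T: "distinct (leaves T)" and distinct_R: "distinct (leaves R)"
    and same_leaves: "set (leaves T) = set (leaves R)"
    and model_T: "signed_tree_model T A B"
begin

lemma transversal_T: "P \<in> A \<union> B \<Longrightarrow> transversal T P"
  using model_T unfolding signed_tree_model_def by blast

lemma noncross_T: "P \<in> A \<union> B \<Longrightarrow> Q \<in> A \<union> B \<Longrightarrow> \<not> cross P Q"
  using model_T unfolding signed_tree_model_def by blast

abbreviation pieces :: "bool list \<Rightarrow> bool list set" where
  "pieces u \<equiv> max_subtrees (leafset T u) R"

lemma pieces_cover: "a \<in> leafset T u \<Longrightarrow> \<exists>x \<in> pieces u. a \<in> leafset R x"
  using max_subtrees_cover leafset_subset same_leaves by blast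

lemma pieces_leafset: "x \<in> pieces u \<Longrightarrow> x \<in> pos R \<and> leafset R x \<subseteq> leafset T u"
  by (rule max_subtreesD)

lemma pieces_prefix:
  assumes "x \<in> pieces u" "x' \<in> pieces u'" "c \<in> leafset R x" "c \<in> leafset R x'"
    and "leafset T u' \<subseteq> leafset T u"
  shows "prefix x x'"
proof -
  have "prefix x x' \<or> prefix x' x"
    using leafset_comparable[OF distinct_R] pieces_leafset assms(1-4) by blast
  moreover have "\<not> strict_prefix x' x"
    using max_subtrees_maximal[OF assms(1)] pieces_leafset[OF assms(2)] assms(5) by blast
  ultimately show ?thesis
    unfolding strict_prefix_def by blast
qed

lemma pieces_strict_prefix:
  assumes "u \<in> pos T" "u' \<in> pos T" "x \<in> pieces u" "x' \<in> pieces u'" "strict_prefix x x'"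
  shows "strict_prefix u u'"
proof -
  obtain z where "z \<in> leafset R x'"
    using leafset_ne by blast
  then have "z \<in> leafset T u" "z \<in> leafset T u'"
    using leafset_antimono[of x x' R] assms(3-5) pieces_leafset
    unfolding strict_prefix_def by blast+
  then have "prefix u u' \<or> prefix u' u"
    using leafset_comparable[OF distinct_T assms(1,2)] by blast
  moreover have "\<not> prefix u' u"
    using leafset_antimono[of u' u T] max_subtrees_maximal[OF assms(4,5)] pieces_leafset[OF assms(3)]
    by blast
  ultimately show ?thesis
    unfolding strict_prefix_def by blast
qed

definition lift :: "bool list set \<Rightarrow> bool list set set" where
  "lift P = {{x, y} | x y. \<exists>u v. P = {u, v} \<and> x \<in> pieces u \<and> y \<in> pieces v}"

(* lift_set A and lift_set B are the new A(R) and B(R). *)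
definition lift_set :: "bool list set set \<Rightarrow> bool list set set" where
  "lift_set C = {X. \<exists>P \<in> C. X \<in> lift P \<and> (\<forall>Q \<in> A \<union> B. X \<in> lift Q \<longrightarrow> pair_le Q P)}"

lemma lift_memE:
  assumes "X \<in> lift P" "X = {c, e}"
  obtains u v where "P = {u, v}" "c \<in> pieces u" "e \<in> pieces v"
proof -
  obtain x y u v where "X = {x, y}" "P = {u, v}" "x \<in> pieces u" "y \<in> pieces v"
    using assms(1) unfolding lift_def by blast
  moreover have "P = {v, u}"
    using \<open>P = {u, v}\<close> by auto
  ultimately show ?thesis
    using that assms(2) by (metis doubleton_eq_iff)
qed

lemma lift_covers_oriented:
  assumes "X \<in> lift P" "covers R X a b"
  obtains u v x y where "P = {u, v}" "X = {x, y}" "x \<in> pieces u" "y \<in> pieces v"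
    "a \<in> leafset R x" "b \<in> leafset R y"
proof -
  obtain x y where "X = {x, y}" "a \<in> leafset R x" "b \<in> leafset R y"
    using assms(2) unfolding covers_def by blast
  moreover obtain u v where "P = {u, v}" "x \<in> pieces u" "y \<in> pieces v"
    using lift_memE[OF assms(1) \<open>X = {x, y}\<close>] by blast
  ultimately show ?thesis
    using that by blast
qed

lemma covers_of_lift: "X \<in> lift P \<Longrightarrow> covers R X a b \<Longrightarrow> covers T P a b"
  by (elim lift_covers_oriented) (auto simp: covers_def dest!: pieces_leafset)

lemma lift_covers:
  assumes "covers T P a b"
  shows "\<exists>X \<in> lift P. covers R X a b"
proof -
  obtain u v where uv: "P = {u, v}" "a \<in> leafset T u" "b \<in> leafset T v"
    using assms unfolding covers_def by blast
  obtain x y where "x \<in> pieces u" "a \<in> leafset R x" "y \<in> pieces v" "b \<in> leafset R y"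
    using pieces_cover[OF uv(2)] pieces_cover[OF uv(3)] by blast
  then have "{x, y} \<in> lift P" "covers R {x, y} a b"
    unfolding lift_def covers_def using uv(1) by blast+
  then show ?thesis by blast
qed

lemma transversal_lift:
  assumes "P \<in> A \<union> B" "X \<in> lift P"
  shows "transversal R X"
proof -
  obtain x y u v where X: "X = {x, y}" "P = {u, v}" "x \<in> pieces u" "y \<in> pieces v"
    using assms(2) unfolding lift_def by blast
  have disj: "leafset T u \<inter> leafset T v = {}"
    using transversal_leafset_disjoint[OF distinct_T transversal_T[OF assms(1)] X(2)] .
  have x: "x \<in> pos R" "leafset R x \<subseteq> leafset T u" and y: "y \<in> pos R" "leafset R y \<subseteq> leafset T v"
    using pieces_leafset X(3,4) by blast+
  have "\<not> prefix x y" "\<not> prefix y x"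
    using leafset_antimono[of x y R] leafset_antimono[of y x R] leafset_ne[of R x] leafset_ne[of R y]
      x(2) y(2) disj by blast+
  moreover from this have "x \<noteq> y" by blast
  ultimately show ?thesis
    unfolding transversal_def using X(1) x(1) y(1) by blast
qed

lemma lift_mono:
  assumes "P \<in> A \<union> B" "X \<in> lift P" "Y \<in> lift Q" "covers R X a b" "covers R Y a b" "pair_le P Q"
  shows "pair_le X Y"
proof -
  obtain u v x y where P: "P = {u, v}" "X = {x, y}" "x \<in> pieces u" "y \<in> pieces v"
    "a \<in> leafset R x" "b \<in> leafset R y"
    using assms(2,4) by (rule lift_covers_oriented)
  obtain u' v' x' y' where Q: "Q = {u', v'}" "Y = {x', y'}" "x' \<in> pieces u'" "y' \<in> pieces v'"
    "a \<in> leafset R x'" "b \<in> leafset R y'"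
    using assms(3,5) by (rule lift_covers_oriented)
  have "a \<in> leafset T u" "b \<in> leafset T v" "a \<in> leafset T u'" "b \<in> leafset T v'"
    using P(3-6) Q(3-6) pieces_leafset by blast+
  then have "prefix u u'" "prefix v v'"
    using pair_le_oriented[OF distinct_T transversal_T[OF assms(1)] P(1) Q(1) _ _ _ _ assms(6)] by blast+
  then have "prefix x x'" "prefix y y'"
    using pieces_prefix P(3-6) Q(3-6) leafset_antimono by blast+
  then show ?thesis
    using P(2) Q(2) pair_leI by blast
qed

lemma lift_noncross:
  assumes "P \<in> A \<union> B" "Q \<in> A \<union> B" "X \<in> lift P" "Y \<in> lift Q"
  shows "\<not> cross X Y"
proof
  assume "cross X Y"
  then obtain c e c' e' where X: "X = {c, e}" and Y: "Y = {c', e'}"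
    and "strict_prefix c c'" "strict_prefix e' e"
    unfolding cross_def by blast
  obtain u v where P: "P = {u, v}" "c \<in> pieces u" "e \<in> pieces v"
    using assms(3) X by (rule lift_memE)
  obtain u' v' where Q: "Q = {u', v'}" "c' \<in> pieces u'" "e' \<in> pieces v'"
    using assms(4) Y by (rule lift_memE)
  have "u \<in> pos T" "v \<in> pos T" "u' \<in> pos T" "v' \<in> pos T"
    using transversalD transversal_T assms(1,2) P(1) Q(1) by metis+
  then have "strict_prefix u u'" "strict_prefix v' v"
    using pieces_strict_prefix P(2,3) Q(2,3) \<open>strict_prefix c c'\<close> \<open>strict_prefix e' e\<close> by blast+
  then have "cross P Q"
    unfolding cross_def using P(1) Q(1) by blast
  then show False
    using noncross_T assms(1,2) by blast
qed

lemma finite_AB: "finite (A \<union> B)"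
  using finite_signed_tree_model[OF model_T] .

lemma lift_covers_some:
  assumes "X \<in> lift P"
  obtains a b where "covers R X a b"
proof -
  obtain x y where "X = {x, y}"
    using assms unfolding lift_def by blast
  moreover obtain a b where "a \<in> leafset R x" "b \<in> leafset R y"
    using leafset_ne by (metis ex_in_conv)
  ultimately show ?thesis
    using that unfolding covers_def by blast
qed

lemma lift_mem_lift_set:
  assumes "Q \<in> A \<union> B" "Y \<in> lift Q"
  shows "Y \<in> lift_set A \<union> lift_set B"
proof -
  obtain a b where cov: "covers R Y a b"
    using assms(2) by (rule lift_covers_some)
  define C where "C = {P \<in> A \<union> B. Y \<in> lift P}"
  have "finite C"
    using finite_AB unfolding C_def by simp
  moreover have "\<forall>P \<in> C. transversal T P" "\<forall>P \<in> C. \<forall>P' \<in> C. \<not> cross P P'"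
    using transversal_T noncross_T unfolding C_def by auto
  moreover have "Q \<in> C" "covers T Q a b"
    using assms covers_of_lift[OF assms(2) cov] unfolding C_def by auto
  ultimately obtain M where M: "top_cover T C M a b"
    using top_cover_exists[OF distinct_T] by blast
  then have "M \<in> A \<union> B" "Y \<in> lift M" "\<forall>P \<in> A \<union> B. Y \<in> lift P \<longrightarrow> pair_le P M"
    using covers_of_lift[OF _ cov] unfolding top_cover_def C_def by auto
  then show ?thesis
    unfolding lift_set_def by blast
qed

lemma lift_set_subset: "lift_set A \<union> lift_set B \<subseteq> (\<Union>P \<in> A \<union> B. lift P)"
  unfolding lift_set_def by blast

lemma lift_set_disjoint: "lift_set A \<inter> lift_set B = {}"
proof -
  have False if X: "X \<in> lift_set A" "X \<in> lift_set B" for X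
  proof -
    obtain P P' where P: "P \<in> A" "X \<in> lift P" "\<forall>Q \<in> A \<union> B. X \<in> lift Q \<longrightarrow> pair_le Q P"
      and P': "P' \<in> B" "X \<in> lift P'" "\<forall>Q \<in> A \<union> B. X \<in> lift Q \<longrightarrow> pair_le Q P'"
      using X unfolding lift_set_def by blast
    have "pair_le P P'" "pair_le P' P"
      using P P' by blast+
    then have "P = P'"
      using pair_le_antisym[OF transversal_T transversal_T] P(1) P'(1) by blast
    then show False
      using P(1) P'(1) model_T unfolding signed_tree_model_def by blast
  qed
  then show ?thesis by blast
qed

lemma signed_tree_model_lift: "signed_tree_model R (lift_set A) (lift_set B)"
  unfolding signed_tree_model_def
proof (intro conjI ballI)
  show "lift_set A \<inter> lift_set B = {}"
    by (rule lift_set_disjoint)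
next
  fix X
  assume "X \<in> lift_set A \<union> lift_set B"
  then obtain P where "P \<in> A \<union> B" "X \<in> lift P"
    using lift_set_subset by blast
  then show "transversal R X"
    by (rule transversal_lift)
next
  fix X Y
  assume "X \<in> lift_set A \<union> lift_set B" "Y \<in> lift_set A \<union> lift_set B"
  then obtain P Q where "P \<in> A \<union> B" "Q \<in> A \<union> B" "X \<in> lift P" "Y \<in> lift Q"
    using lift_set_subset by blast
  then show "\<not> cross X Y"
    by (rule lift_noncross)
qed

lemma top_cover_lift:
  assumes "P \<in> B" "top_cover T (A \<union> B) P a b"
  shows "\<exists>X \<in> lift_set B. top_cover R (lift_set A \<union> lift_set B) X a b"
proof -
  obtain X where X: "X \<in> lift P" "covers R X a b"
    using lift_covers assms(2) unfolding top_cover_def by blast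
  have "X \<in> lift_set B"
    using assms X covers_of_lift unfolding lift_set_def top_cover_def by blast
  moreover have "pair_le Y X" if Y: "Y \<in> lift_set A \<union> lift_set B" "covers R Y a b" for Y
  proof -
    obtain Q where Q: "Q \<in> A \<union> B" "Y \<in> lift Q"
      using Y(1) lift_set_subset by blast
    then have "pair_le Q P"
      using assms(2) covers_of_lift[OF Q(2) Y(2)] unfolding top_cover_def by blast
    then show ?thesis
      using lift_mono[OF Q(1,2) X(1) Y(2) X(2)] by blast
  qed
  ultimately show ?thesis
    using X(2) unfolding top_cover_def by blast
qed

lemma top_cover_of_lift:
  assumes "X \<in> lift_set B" "top_cover R (lift_set A \<union> lift_set B) X a b"
  shows "\<exists>P \<in> B. top_cover T (A \<union> B) P a b"
proof -
  obtain P where P: "P \<in> B" "X \<in> lift P" and P_max: "\<forall>Q \<in> A \<union> B. X \<in> lift Q \<longrightarrow> pair_le Q P"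
    using assms(1) unfolding lift_set_def by blast
  have X_cov: "covers R X a b"
    using assms(2) unfolding top_cover_def by blast
  have P_cov: "covers T P a b"
    using covers_of_lift[OF P(2) X_cov] .
  have "pair_le Q P" if Q: "Q \<in> A \<union> B" "covers T Q a b" for Q
  proof -
    have "pair_le P Q \<or> pair_le Q P"
      using covers_pair_le_total[OF distinct_T transversal_T transversal_T noncross_T noncross_T
          P_cov Q(2)] P(1) Q(1) by blast
    moreover have "pair_le Q P" if PQ: "pair_le P Q"
    proof -
      obtain Y where Y: "Y \<in> lift Q" "covers R Y a b"
        using lift_covers[OF Q(2)] by blast
      have "pair_le Y X"
        using assms(2) lift_mem_lift_set[OF Q(1) Y(1)] Y(2) unfolding top_cover_def by blast
      moreover have "pair_le X Y"
        using lift_mono[OF _ P(2) Y(1) X_cov Y(2) PQ] P(1) by blast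
      ultimately have "X = Y"
        using pair_le_antisym[OF transversal_lift transversal_lift] P Q(1) Y(1) by blast
      then show ?thesis
        using P_max Q(1) Y(1) by blast
    qed
    ultimately show ?thesis by blast
  qed
  then show ?thesis
    using P P_cov unfolding top_cover_def by blast
qed

lemma models_graph_lift:
  assumes "models_graph T A B E"
  shows "models_graph R (lift_set A) (lift_set B) E"
  unfolding models_graph_def
proof (intro conjI allI impI)
  show "signed_tree_model R (lift_set A) (lift_set B)"
    by (rule signed_tree_model_lift)
  fix r1 r2
  assume r: "is_leaf_pos R r1" "is_leaf_pos R r2" "r1 \<noteq> r2"
  obtain t1 t2 where t: "is_leaf_pos T t1" "lbl T t1 = lbl R r1"
      "is_leaf_pos T t2" "lbl T t2 = lbl R r2"
    using leaf_pos_exists lbl_mem_leaves r(1,2) same_leaves by metis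
  have "t1 \<noteq> t2"
    using leaf_pos_inj[OF distinct_R r(1,2)] r(3) t by metis
  then have "E (lbl R r1) (lbl R r2) \<longleftrightarrow> model_adj A B t1 t2"
    using assms t unfolding models_graph_def by metis
  also have "\<dots> \<longleftrightarrow> (\<exists>P \<in> B. top_cover T (A \<union> B) P (lbl R r1) (lbl R r2))"
    using model_adj_iff_top_cover[OF distinct_T model_T t(1,3)] t(2,4) by simp
  also have "\<dots> \<longleftrightarrow> model_adj (lift_set A) (lift_set B) r1 r2"
    using top_cover_lift top_cover_of_lift
      model_adj_iff_top_cover[OF distinct_R signed_tree_model_lift r(1,2)] by blast
  finally show "E (lbl R r1) (lbl R r2) \<longleftrightarrow> model_adj (lift_set A) (lift_set B) r1 r2" .
qed

lemma lift_subset_image: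
  assumes "P = {u, v}"
  shows "lift P \<subseteq> (\<lambda>(x, y). {x, y}) ` (pieces u \<times> pieces v)"
proof
  fix X
  assume "X \<in> lift P"
  then obtain x y u1 v1 where X: "X = {x, y}" "P = {u1, v1}" "x \<in> pieces u1" "y \<in> pieces v1"
    unfolding lift_def by blast
  then consider "u1 = u" "v1 = v" | "u1 = v" "v1 = u"
    using assms by (auto simp: doubleton_eq_iff)
  then show "X \<in> (\<lambda>(x, y). {x, y}) ` (pieces u \<times> pieces v)"
  proof cases
    case 1
    then show ?thesis using X by auto
  next
    case 2
    then have "X = (\<lambda>(x, y). {x, y}) (y, x)"
      using X(1) by auto
    then show ?thesis using X 2 by auto
  qed
qed

lemma card_lift_le:
  assumes "P = {u, v}"
  shows "finite (lift P)" "card (lift P) \<le> card (pieces u) * card (pieces v)"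
proof -
  have fin: "finite ((\<lambda>(x, y). {x, y}) ` (pieces u \<times> pieces v))"
    by (simp add: finite_max_subtrees)
  then show "finite (lift P)"
    using lift_subset_image[OF assms] by (rule finite_subset[rotated])
  have "card (lift P) \<le> card ((\<lambda>(x, y). {x, y}) ` (pieces u \<times> pieces v))"
    using lift_subset_image[OF assms] fin by (rule card_mono[rotated])
  also have "\<dots> \<le> card (pieces u \<times> pieces v)"
    by (rule card_image_le) (simp add: finite_max_subtrees)
  finally show "card (lift P) \<le> card (pieces u) * card (pieces v)"
    by (simp add: card_cartesian_product)
qed

lemma card_pieces_le:
  assumes "leaves T = [a..<b]" "leaves R = [a..<b]" "P \<in> A \<union> B" "P = {u, v}"
  shows "card (pieces u) \<le> max 1 (2 * height R - 2)"
proof -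
  obtain i j where ij: "leafset T u = {i..<j}"
    using leafset_interval[OF assms(1)] by blast
  have "leafset T u \<inter> leafset T v = {}"
    using transversal_leafset_disjoint[OF distinct_T transversal_T[OF assms(3)] assms(4)] .
  moreover have "leafset T v \<subseteq> {a..<b}"
    using leafset_subset[of T v] assms(1) by simp
  ultimately have "\<not> {a..<b} \<subseteq> {i..<j}"
    using leafset_ne[of T v] ij by blast
  then show ?thesis
    using card_max_subtrees_interval[OF assms(2)] ij by simp
qed

lemma card_lift_set_le:
  assumes "leaves T = [a..<b]" "leaves R = [a..<b]"
  shows "card (lift_set A \<union> lift_set B) \<le> card (A \<union> B) * (max 1 (2 * height R - 2))\<^sup>2"
proof -
  let ?K = "max 1 (2 * height R - 2)"
  have lift: "finite (lift P) \<and> card (lift P) \<le> ?K\<^sup>2" if P: "P \<in> A \<union> B" for P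
  proof -
    obtain u v where uv: "P = {u, v}"
      using transversal_T[OF P] unfolding transversal_def by blast
    then have "P = {v, u}" by auto
    then have "card (pieces u) * card (pieces v) \<le> ?K * ?K"
      using card_pieces_le[OF assms P] uv by (intro mult_mono) auto
    then show ?thesis
      using card_lift_le[OF uv] by (simp add: power2_eq_square)
  qed
  have "card (lift_set A \<union> lift_set B) \<le> card (\<Union>P \<in> A \<union> B. lift P)"
    using lift_set_subset by (rule card_mono[rotated]) (use finite_AB lift in blast)
  also have "\<dots> \<le> (\<Sum>P \<in> A \<union> B. card (lift P))"
    by (rule card_UN_le[OF finite_AB])
  also have "\<dots> \<le> (\<Sum>P \<in> A \<union> B. ?K\<^sup>2)"
    using lift by (intro sum_mono) blast
  finally show ?thesis by simp
qed

end

theorem lemma4p5: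
  fixes n :: nat and d :: real and T R :: btree
    and A B :: "bool list set set" and E :: "nat \<Rightarrow> nat \<Rightarrow> bool"
  assumes "n \<ge> 2"
    and "leaves T = [1..<n+1]"
    and "models_graph T A B E"
    and "clean T A B"
    and "sparse d T A B"
    and "complete R"
    and "leaves R = [1..<n+1]"
  shows "\<exists>AR BR. models_graph R AR BR E \<and> sparse (4 * d * (log 2 n)^2) R AR BR"
proof -
  interpret tree_transfer T R A B
    using assms(2,3,7) by unfold_locales (simp_all add: models_graph_def)
  let ?K = "max 1 (2 * height R - 2)"
  have sparse_T: "real (card (A \<union> B)) \<le> d * real (card (pos R))"
    using assms(5) card_pos[of T] card_pos[of R] assms(2,7) unfolding sparse_def by simp
  have K: "real ?K ^ 2 \<le> (2 * log 2 n) ^ 2"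
    using complete_height_le_log[OF assms(6)] assms(1,7) by (intro power_mono) auto
  have "real (card (lift_set A \<union> lift_set B)) \<le> real (card (A \<union> B)) * real ?K ^ 2"
    using card_lift_set_le[OF assms(2,7)] by (metis of_nat_le_iff of_nat_mult of_nat_power)
  also have "\<dots> \<le> d * real (card (pos R)) * (2 * log 2 n) ^ 2"
    using sparse_T K by (rule mult_mono) (use sparse_T in auto)
  finally have "sparse (4 * d * (log 2 n)^2) R (lift_set A) (lift_set B)"
    unfolding sparse_def by (simp add: power_mult_distrib mult_ac)
  with models_graph_lift[OF assms(3)] show ?thesis by blast
qed

end
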